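(* Let $\mathcal{U}\subseteq\mathbb{R}^d$, $\mathcal{V}\subseteq\mathbb{R}^D$ be compact convex with $\|u\|\le B$ for all $u\in\mathcal{U}$. Let $f:\mathcal{U}\times\mathcal{V}\to\mathbb{R}$ be continuous, with $f(\cdot,v)$ convex and differentiable for every $v$, $\|\nabla_u f(u,v)\|\le L$ for all $(u,v)$, $f(u,\cdot)$ $l$-Lipschitz and $\nabla_u f(u,\cdot)$ $r$-Lipschitz for every $u$. Let $\phi$ attain its minimum $\phi^\ast=\phi(u^\ast)$ on $\mathcal{U}$. Consider sequences $u_1,u_2,\dots\in\mathcal{U}$ and finite sets $A_1,A_2,\dots\subseteq\mathcal{V}$, numbers $\epsilon_i\ge0$, $\rho_i\ge0$, $\xi_i\ge0$, with updates $u_{i+1}=u_i-\rho_i z_i$ where $z_i\in\mathrm{co}\{\nabla_u f(u_i,v): v\in R^{\epsilon_i}_{A_i}(u_i)\}$. Suppose there is $i_0\ge1$ such that for all $i\ge i_0$: $R(u_i)$ and $S(u_i)$ are finite, $\epsilon_i<\zeta_i$, and $\max[d_H(R(u_i),A_i),d_H(A_i,S(u_i))]\le\delta_i$ where $\delta_i<\tfrac12(\zeta_i-\epsilon_i)/l$ and $\delta_i\le\tfrac12\xi_i/(rB)$. If $\sum_i\rho_i=\infty$, $\sum_i\rho_i^2<\infty$ and $\sum_i\rho_i\xi_i<\infty$, then $\min[\phi(u_1),\dots,\phi(u_i)]\to\phi^\ast$ as $i\to\infty$.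
   Context: Definitions: $\phi(u)=\max_{v\in\mathcal{V}} f(u,v)$, $R(u)=\{v\in\mathcal{V}: f(u,v)=\phi(u)\}$, $S(u)=\{v_0\in\mathcal{V}:\exists r>0,\ \forall v\in\mathcal{V},\ \|v_0-v\|\le r\Rightarrow f(u,v_0)\ge f(u,v)\}$ (local maximum points of $f(u,\cdot)$). $\zeta_i=\phi(u_i)-\max_{v\in S(u_i)\setminus R(u_i)}f(u_i,v)$, with $\zeta_i=\infty$ if $S(u_i)=R(u_i)$. For finite $A$: $\phi_A(u)=\max_{v\in A}f(u,v)$, $R^\epsilon_A(u)=\{v\in A:\phi_A(u)-f(u,v)\le\epsilon\}$. $d_H(X,Y)=\max_{x\in X}\min_{y\in Y}\|x-y\|$. $\mathrm{co}$ denotes convex hull. *)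

theory Defs
  imports "HOL-Analysis.Analysis"
begin

definition phi :: "('a \<Rightarrow> 'b \<Rightarrow> real) \<Rightarrow> 'b set \<Rightarrow> 'a \<Rightarrow> real" where
  "phi f V u = (SUP v\<in>V. f u v)"

definition Rset :: "('a \<Rightarrow> 'b \<Rightarrow> real) \<Rightarrow> 'b set \<Rightarrow> 'a \<Rightarrow> 'b set" where
  "Rset f V u = {v \<in> V. f u v = phi f V u}"

definition Sset :: "('a \<Rightarrow> 'b::real_normed_vector \<Rightarrow> real) \<Rightarrow> 'b set \<Rightarrow> 'a \<Rightarrow> 'b set" where
  "Sset f V u = {v0 \<in> V. \<exists>r>0. \<forall>v\<in>V. norm (v0 - v) \<le> r \<longrightarrow> f u v0 \<ge> f u v}"

definition zeta :: "('a \<Rightarrow> 'b::real_normed_vector \<Rightarrow> real) \<Rightarrow> 'b set \<Rightarrow> 'a \<Rightarrow> ereal" where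
  "zeta f V u = (if Sset f V u = Rset f V u then \<infinity>
      else ereal (phi f V u - (SUP v\<in>Sset f V u - Rset f V u. f u v)))"

definition phiA :: "('a \<Rightarrow> 'b \<Rightarrow> real) \<Rightarrow> 'b set \<Rightarrow> 'a \<Rightarrow> real" where
  "phiA f A u = Max ((\<lambda>v. f u v) ` A)"

definition RepsA :: "('a \<Rightarrow> 'b \<Rightarrow> real) \<Rightarrow> 'b set \<Rightarrow> real \<Rightarrow> 'a \<Rightarrow> 'b set" where
  "RepsA f A eps u = {v \<in> A. phiA f A u - f u v \<le> eps}"

definition dH :: "'b::real_normed_vector set \<Rightarrow> 'b set \<Rightarrow> real" where
  "dH X Y = Max ((\<lambda>x. Min ((\<lambda>y. norm (x - y)) ` Y)) ` X)"

end

theory Submission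
  imports Defs
begin

text \<open>
  For \<open>s \<in> R(x)\<close> the gradient of \<open>f(\<cdot>, s)\<close> at \<open>x\<close> is a subgradient of the convex function \<open>\<phi>\<close>
  at \<open>x\<close>. Since \<open>\<epsilon> + 2l\<delta> < \<zeta>\<close> and \<open>A\<close> is \<open>\<delta>\<close>-close to \<open>R(x)\<close> and \<open>S(x)\<close>, every \<open>\<epsilon>\<close>-maximiser over \<open>A\<close> lies
  within \<open>\<delta>\<close> of a global maximiser; by the Lipschitz continuity of \<open>\<nabla>\<^sub>uf(x, \<cdot>)\<close> the direction
  \<open>z\<^sub>i\<close> is therefore a \<open>\<xi>\<^sub>i\<close>-subgradient of \<open>\<phi>\<close> at \<open>u\<^sub>i\<close>. The classical subgradient-method
  estimate \<open>\<parallel>u\<^sub>i\<^sub>+\<^sub>1 - u\<^sup>*\<parallel>\<^sup>2 \<le> \<parallel>u\<^sub>i - u\<^sup>*\<parallel>\<^sup>2 - 2\<rho>\<^sub>i(\<phi>(u\<^sub>i) - \<phi>\<^sup>* - \<xi>\<^sub>i) + \<rho>\<^sub>i\<^sup>2L\<^sup>2\<close> then shows that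
  \<open>\<phi>(u\<^sub>i) \<ge> \<phi>\<^sup>* + e\<close> for all \<open>i\<close> would force \<open>\<Sum>\<rho>\<^sub>i < \<infinity>\<close>.
\<close>

lemma convex_on_above_tangent_within:
  fixes F :: "'a::real_normed_vector \<Rightarrow> real"
  assumes U: "convex U" and cv: "convex_on U F" and x: "x \<in> U" and w: "w \<in> U"
    and d: "(F has_derivative F') (at x within U)"
  shows "F x + F' (w - x) \<le> F w"
proof -
  define p where "p = (\<lambda>t::real. x + t *\<^sub>R (w - x))"
  have pU: "p ` {0..1} \<subseteq> U"
  proof
    fix y assume "y \<in> p ` {0..1}"
    then obtain t where "t \<in> {0..1}" "y = (1 - t) *\<^sub>R x + t *\<^sub>R w"
      by (auto simp: p_def algebra_simps)
    then show "y \<in> U" using U x w by (auto simp: convex_alt)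
  qed
  have p0: "p 0 = x" by (simp add: p_def)
  have lin: "linear F'" using d by (rule has_derivative_linear)
  have dp: "(p has_derivative (\<lambda>t. t *\<^sub>R (w - x))) (at 0 within {0..1})"
    unfolding p_def by (auto intro!: derivative_eq_intros)
  have "(F has_derivative F') (at (p 0) within p ` {0..1})"
    using has_derivative_subset[OF d pU] p0 by simp
  from has_derivative_in_compose[OF dp this]
  have "((\<lambda>t. F (p t)) has_real_derivative F' (w - x)) (at 0 within {0..1})"
    by (simp add: has_field_derivative_def linear_cmul[OF lin] mult.commute[of _ "F' (w - x)"])
  hence "((\<lambda>t. (F (p t) - F (p 0)) / (t - 0)) \<longlongrightarrow> F' (w - x)) (at 0 within {0..1})"
    by (simp add: has_field_derivative_iff)
  hence "((\<lambda>t. (F (p t) - F (p 0)) / (t - 0)) \<longlongrightarrow> F' (w - x)) (at 0 within {0<..1})"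
    by (rule tendsto_within_subset) auto
  hence lim: "((\<lambda>t. (F (p t) - F x) / t) \<longlongrightarrow> F' (w - x)) (at 0 within {0<..1})"
    by (simp add: p0)
  have "eventually (\<lambda>t. (F (p t) - F x) / t \<le> F w - F x) (at 0 within {0<..1})"
    unfolding eventually_at_filter
  proof (intro always_eventually allI impI)
    fix t :: real assume "t \<in> {0<..1}"
    hence t: "0 < t" "t \<le> 1" by auto
    have "F (p t) = F ((1 - t) *\<^sub>R x + t *\<^sub>R w)" by (simp add: p_def algebra_simps)
    also have "\<dots> \<le> (1 - t) * F x + t * F w" using convex_onD[OF cv] t x w by simp
    finally have "F (p t) - F x \<le> t * (F w - F x)" by (simp add: algebra_simps)
    then show "(F (p t) - F x) / t \<le> F w - F x"
      using t by (simp add: divide_le_eq mult.commute)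
  qed
  with lim have "F' (w - x) \<le> F w - F x"
    by (rule tendsto_upperbound) (simp add: at_within_eq_bot_iff)
  thus ?thesis by simp
qed

lemma phi_upper:
  assumes "compact V" "continuous_on V (f x)" "v \<in> V"
  shows "f x v \<le> phi f V x"
  unfolding phi_def using assms
  by (intro cSUP_upper bounded_imp_bdd_above compact_imp_bounded compact_continuous_image)

lemma phi_attained:
  assumes "compact V" "V \<noteq> {}" "continuous_on V (f x)"
  obtains s where "s \<in> V" "f x s = phi f V x"
proof -
  obtain s where s: "s \<in> V" "\<forall>v\<in>V. f x v \<le> f x s"
    using compact_attains_sup[OF compact_continuous_image[OF assms(3,1)]] assms(2) by auto
  have "phi f V x = f x s" unfolding phi_def by (rule cSup_eq_maximum) (use s in auto)
  with s that show ?thesis by simp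
qed

lemma Rset_subset_Sset:
  assumes "compact V" "continuous_on V (f x)"
  shows "Rset f V x \<subseteq> Sset f V x"
  using phi_upper[of V f x, OF assms] unfolding Rset_def Sset_def by (auto intro!: exI[of _ 1])

lemma dH_le_imp_near:
  assumes "finite X" "finite Y" "Y \<noteq> {}" "a \<in> X" "dH X Y \<le> \<delta>"
  obtains b where "b \<in> Y" "norm (a - b) \<le> \<delta>"
proof -
  have "Min ((\<lambda>y. norm (a - y)) ` Y) \<le> dH X Y"
    unfolding dH_def using assms by (intro Max_ge) auto
  moreover have "Min ((\<lambda>y. norm (a - y)) ` Y) \<in> (\<lambda>y. norm (a - y)) ` Y"
    using assms by (intro Min_in) auto
  ultimately show ?thesis using assms that by force
qed

lemma phiA_ge_phi:
  assumes V: "compact V" "V \<noteq> {}" and A: "finite A" "A \<subseteq> V" "A \<noteq> {}"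
    and lip: "l-lipschitz_on V (f x)"
    and fR: "finite (Rset f V x)" and dR: "dH (Rset f V x) A \<le> \<delta>"
  shows "phi f V x - l * \<delta> \<le> phiA f A x"
proof -
  have cont: "continuous_on V (f x)" using lip by (rule lipschitz_on_continuous_on)
  obtain s where s: "s \<in> V" "f x s = phi f V x" using phi_attained[of V f x, OF V cont] .
  then have "s \<in> Rset f V x" by (simp add: Rset_def)
  then obtain a where a: "a \<in> A" "norm (s - a) \<le> \<delta>" using dH_le_imp_near[OF fR A(1,3) _ dR] by blast
  have "f x s - f x a \<le> l * norm (s - a)"
    using lipschitz_onD[OF lip, of s a] s a A by (auto simp: dist_norm)
  also have "\<dots> \<le> l * \<delta>" using a lipschitz_on_nonneg[OF lip] by (simp add: mult_left_mono)
  moreover have "f x a \<le> phiA f A x" unfolding phiA_def using a A by (intro Max_ge) auto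
  ultimately show ?thesis using s by linarith
qed

text \<open>The gap \<open>\<zeta>\<close> separates \<open>R(x)\<close> from the other local maximisers, so an \<open>\<epsilon>\<close>-maximiser over \<open>A\<close>
  cannot be \<open>\<delta>\<close>-close to a point of \<open>S(x) - R(x)\<close>.\<close>
lemma RepsA_near_Rset:
  assumes V: "compact V" "V \<noteq> {}" and A: "finite A" "A \<subseteq> V"
    and lip: "l-lipschitz_on V (f x)"
    and fR: "finite (Rset f V x)" and fS: "finite (Sset f V x)"
    and dR: "dH (Rset f V x) A \<le> \<delta>" and dS: "dH A (Sset f V x) \<le> \<delta>"
    and gap: "ereal (2 * l * \<delta> + \<epsilon>) < zeta f V x"
    and v: "v \<in> RepsA f A \<epsilon> x"
  obtains s where "s \<in> Rset f V x" "norm (v - s) \<le> \<delta>"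
proof -
  have cont: "continuous_on V (f x)" using lip by (rule lipschitz_on_continuous_on)
  have vA: "v \<in> A" and v_eps: "phiA f A x - f x v \<le> \<epsilon>" using v by (auto simp: RepsA_def)
  obtain s0 where "s0 \<in> V" "f x s0 = phi f V x" using phi_attained[of V f x, OF V cont] .
  then have "Sset f V x \<noteq> {}" using Rset_subset_Sset[of V f x, OF V(1) cont] by (auto simp: Rset_def)
  then obtain s where s: "s \<in> Sset f V x" "norm (v - s) \<le> \<delta>"
    using dH_le_imp_near[OF A(1) fS _ vA dS] by blast
  have sV: "s \<in> V" using s by (simp add: Sset_def)
  have "f x v - f x s \<le> l * norm (v - s)"
    using lipschitz_onD[OF lip, of v s] vA A sV by (auto simp: dist_norm)
  also have "\<dots> \<le> l * \<delta>" using s lipschitz_on_nonneg[OF lip] by (simp add: mult_left_mono)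
  finally have fs: "phi f V x - 2 * l * \<delta> - \<epsilon> \<le> f x s"
    using v_eps phiA_ge_phi[of V A l f x, OF V A _ lip fR dR] vA by force
  have "s \<in> Rset f V x"
  proof (rule ccontr)
    assume nR: "s \<notin> Rset f V x"
    then have "f x s \<le> (SUP v\<in>Sset f V x - Rset f V x. f x v)"
      using s fS by (intro cSUP_upper) (auto intro!: bdd_above_finite)
    moreover have "2 * l * \<delta> + \<epsilon> < phi f V x - (SUP v\<in>Sset f V x - Rset f V x. f x v)"
      using gap nR s by (auto simp: zeta_def split: if_splits)
    ultimately show False using fs by linarith
  qed
  with s that show ?thesis by blast
qed

lemma Rset_gradient_subgradient:
  assumes U: "convex U" and x: "x \<in> U" and w: "w \<in> U"
    and V: "compact V" and cont: "continuous_on V (f w)"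
    and s: "s \<in> Rset f V x" and cvx: "convex_on U (\<lambda>y. f y s)"
    and grad: "((\<lambda>y. f y s) has_derivative (\<lambda>h. G \<bullet> h)) (at x within U)"
  shows "phi f V x + G \<bullet> (w - x) \<le> phi f V w"
proof -
  have "s \<in> V" "f x s = phi f V x" using s by (auto simp: Rset_def)
  then show ?thesis
    using convex_on_above_tangent_within[OF U cvx x w grad] phi_upper[of V f w, OF V cont] by force
qed

lemma approx_subgradient:
  fixes f :: "'a::real_inner \<Rightarrow> 'b::real_normed_vector \<Rightarrow> real" and g :: "'a \<Rightarrow> 'b \<Rightarrow> 'a"
  assumes U: "convex U" and B: "\<forall>y\<in>U. norm y \<le> B"
    and V: "compact V" "V \<noteq> {}"
    and cvx: "\<forall>v\<in>V. convex_on U (\<lambda>y. f y v)"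
    and grad: "\<forall>v\<in>V. ((\<lambda>y. f y v) has_derivative (\<lambda>h. g x v \<bullet> h)) (at x within U)"
    and lip_f: "\<forall>y\<in>U. l-lipschitz_on V (f y)"
    and lip_g: "r-lipschitz_on V (g x)"
    and x: "x \<in> U" and w: "w \<in> U" and A: "finite A" "A \<subseteq> V"
    and fR: "finite (Rset f V x)" and fS: "finite (Sset f V x)"
    and dR: "dH (Rset f V x) A \<le> \<delta>" and dS: "dH A (Sset f V x) \<le> \<delta>"
    and gap: "ereal (2 * l * \<delta> + \<epsilon>) < zeta f V x"
    and xi: "2 * r * B * \<delta> \<le> \<xi>"
    and z: "z \<in> convex hull (g x ` RepsA f A \<epsilon> x)"
  shows "phi f V x - phi f V w - \<xi> \<le> z \<bullet> (x - w)"
proof -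
  let ?T = "{y. phi f V x - phi f V w - \<xi> \<le> (x - w) \<bullet> y}"
  have "g x v \<in> ?T" if v: "v \<in> RepsA f A \<epsilon> x" for v
  proof -
    have vV: "v \<in> V" using v A by (auto simp: RepsA_def)
    obtain s where s: "s \<in> Rset f V x" "norm (v - s) \<le> \<delta>"
      using RepsA_near_Rset[OF V A lip_f[rule_format, OF x] fR fS dR dS gap v] .
    have sV: "s \<in> V" using s by (simp add: Rset_def)
    have "phi f V x + g x s \<bullet> (w - x) \<le> phi f V w"
      using Rset_gradient_subgradient[OF U x w V(1) _ s(1) cvx[rule_format, OF sV] grad[rule_format, OF sV]]
        lipschitz_on_continuous_on[OF lip_f[rule_format, OF w]] by blast
    then have sub: "phi f V x - phi f V w \<le> (x - w) \<bullet> g x s"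
      using inner_minus_left[of "x - w" "g x s"] by (simp add: inner_commute)
    have "norm (x - w) \<le> 2 * B" using B x w norm_triangle_ineq4[of x w] by (metis add_mono mult_2 order_trans)
    moreover have "norm (g x v - g x s) \<le> r * \<delta>"
      using lipschitz_onD[OF lip_g vV sV] s lipschitz_on_nonneg[OF lip_g]
      by (auto simp: dist_norm intro: order_trans mult_left_mono)
    ultimately have "\<bar>(x - w) \<bullet> (g x v - g x s)\<bar> \<le> (2 * B) * (r * \<delta>)"
      using Cauchy_Schwarz_ineq2[of "x - w" "g x v - g x s"]
      by (smt (verit) mult_mono norm_ge_zero)
    with xi sub show ?thesis by (simp add: inner_diff_right abs_le_iff algebra_simps)
  qed
  then have "convex hull (g x ` RepsA f A \<epsilon> x) \<subseteq> ?T"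
    by (intro hull_minimal) (auto simp: convex_halfspace_ge)
  with z show ?thesis by (auto simp: inner_commute)
qed

lemma summable_of_descent:
  fixes D a c :: "nat \<Rightarrow> real"
  assumes descent: "\<And>i. i \<ge> n \<Longrightarrow> D (Suc i) \<le> D i - a i + c i"
    and D: "\<And>i. D i \<ge> 0" and a: "\<And>i. i \<ge> n \<Longrightarrow> a i \<ge> 0" and c: "\<And>i. i \<ge> n \<Longrightarrow> c i \<ge> 0"
    and "summable c"
  shows "summable a"
proof -
  have telescope: "D (k + n) + (\<Sum>i<k. a (i + n)) \<le> D n + (\<Sum>i<k. c (i + n))" for k
  proof (induction k)
    case (Suc k)
    with descent[of "k + n"] show ?case by simp
  qed simp
  have cs: "summable (\<lambda>i. c (i + n))" using \<open>summable c\<close> by simp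
  have bound: "(\<Sum>i<k. a (i + n)) \<le> D n + (\<Sum>i. c (i + n))" for k
    using telescope[of k] D[of "k + n"] sum_le_suminf[OF cs, of "{..<k}"] c by force
  have "summable (\<lambda>i. a (i + n))" by (rule summableI_nonneg_bounded[OF _ bound]) (simp add: a)
  then show ?thesis by simp
qed

lemma tendsto_running_Min:
  fixes P :: "nat \<Rightarrow> real"
  assumes lower: "\<And>j. j \<ge> 1 \<Longrightarrow> p \<le> P j" and approach: "\<And>e. e > 0 \<Longrightarrow> \<exists>j\<ge>1. P j < p + e"
  shows "(\<lambda>i. Min (P ` {1..i})) \<longlonglongrightarrow> p"
proof (rule order_tendstoI)
  fix a assume "a < p"
  show "eventually (\<lambda>i. a < Min (P ` {1..i})) sequentially"
    using eventually_ge_at_top[of 1] by eventually_elim (use lower \<open>a < p\<close> in force)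
next
  fix a assume "p < a"
  then obtain j where j: "j \<ge> 1" "P j < a" using approach[of "a - p"] by auto
  show "eventually (\<lambda>i. Min (P ` {1..i}) < a) sequentially"
    using eventually_ge_at_top[of j]
    by eventually_elim (use j in \<open>force intro: le_less_trans[OF Min_le]\<close>)
qed

lemma subgradient_method_running_Min:
  fixes u z :: "nat \<Rightarrow> 'a::real_inner" and P rho xi :: "nat \<Rightarrow> real"
  assumes n: "n \<ge> 1" and lower: "\<And>j. j \<ge> 1 \<Longrightarrow> p \<le> P j"
    and upd: "\<And>i. i \<ge> n \<Longrightarrow> u (Suc i) = u i - rho i *\<^sub>R z i"
    and bounded: "\<And>i. i \<ge> n \<Longrightarrow> norm (z i) \<le> L"
    and subgrad: "\<And>i. i \<ge> n \<Longrightarrow> P i - p - xi i \<le> z i \<bullet> (u i - ustar)"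
    and nonneg: "\<And>i. i \<ge> n \<Longrightarrow> rho i \<ge> 0 \<and> xi i \<ge> 0"
    and div: "\<not> summable rho" and sq: "summable (\<lambda>i. (rho i)\<^sup>2)"
    and sx: "summable (\<lambda>i. rho i * xi i)"
  shows "(\<lambda>i. Min (P ` {1..i})) \<longlonglongrightarrow> p"
proof (rule tendsto_running_Min[OF lower])
  fix e :: real assume e: "e > 0"
  show "\<exists>j\<ge>1. P j < p + e"
  proof (rule ccontr)
    assume "\<not> (\<exists>j\<ge>1. P j < p + e)"
    then have far: "\<And>j. j \<ge> 1 \<Longrightarrow> p + e \<le> P j" by force
    define D where "D i = (norm (u i - ustar))\<^sup>2" for i
    have descent: "D (Suc i) \<le> D i - 2 * e * rho i + (2 * (rho i * xi i) + L\<^sup>2 * (rho i)\<^sup>2)"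
      if i: "i \<ge> n" for i
    proof -
      have "D (Suc i) = D i - 2 * rho i * (z i \<bullet> (u i - ustar)) + (rho i)\<^sup>2 * (norm (z i))\<^sup>2"
        unfolding D_def upd[OF i] power2_norm_eq_inner
        by (simp add: inner_diff_left inner_diff_right inner_commute power2_eq_square algebra_simps)
      moreover have "2 * rho i * (e - xi i) \<le> 2 * rho i * (z i \<bullet> (u i - ustar))"
        using subgrad[OF i] far[of i] nonneg[OF i] i n by (intro mult_left_mono) auto
      moreover have "(rho i)\<^sup>2 * (norm (z i))\<^sup>2 \<le> (rho i)\<^sup>2 * L\<^sup>2"
        using bounded[OF i] by (intro mult_left_mono power_mono) auto
      ultimately show ?thesis by (simp add: algebra_simps)
    qed
    have "summable (\<lambda>i. 2 * (rho i * xi i) + L\<^sup>2 * (rho i)\<^sup>2)"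
      by (intro summable_add summable_mult sx sq)
    then have "summable (\<lambda>i. 2 * e * rho i)"
      using summable_of_descent[of n D "\<lambda>i. 2 * e * rho i", OF descent] nonneg e
      by (force simp: D_def)
    with e div show False by simp
  qed
qed

theorem mainTheorem5:
  fixes U :: "'a::euclidean_space set" and V :: "'b::euclidean_space set"
    and f :: "'a \<Rightarrow> 'b \<Rightarrow> real" and g :: "'a \<Rightarrow> 'b \<Rightarrow> 'a"
    and B L l r :: real and ustar :: 'a
    and u z :: "nat \<Rightarrow> 'a" and A :: "nat \<Rightarrow> 'b set"
    and eps rho xi delta :: "nat \<Rightarrow> real" and i0 :: nat
  assumes U: "compact U" "convex U"
    and V: "compact V" "convex V" "V \<noteq> {}"
    and B: "\<forall>x\<in>U. norm x \<le> B"
    and cont: "continuous_on (U \<times> V) (\<lambda>(x, v). f x v)"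
    and cvx: "\<forall>v\<in>V. convex_on U (\<lambda>x. f x v)"
    and grad: "\<forall>x\<in>U. \<forall>v\<in>V. ((\<lambda>y. f y v) has_derivative (\<lambda>h. g x v \<bullet> h)) (at x within U)"
    and gbound: "\<forall>x\<in>U. \<forall>v\<in>V. norm (g x v) \<le> L"
    and lip_f: "\<forall>x\<in>U. l-lipschitz_on V (\<lambda>v. f x v)"
    and lip_g: "\<forall>x\<in>U. r-lipschitz_on V (\<lambda>v. g x v)"
    and ustar: "ustar \<in> U" "\<forall>x\<in>U. phi f V ustar \<le> phi f V x"
    and useq: "\<forall>i\<ge>1. u i \<in> U"
    and Aseq: "\<forall>i\<ge>1. finite (A i) \<and> A i \<subseteq> V"
    and nonneg: "\<forall>i\<ge>1. eps i \<ge> 0 \<and> rho i \<ge> 0 \<and> xi i \<ge> 0"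
    and upd: "\<forall>i\<ge>1. u (Suc i) = u i - rho i *\<^sub>R z i"
    and zdir: "\<forall>i\<ge>1. z i \<in> convex hull ((\<lambda>v. g (u i) v) ` RepsA f (A i) (eps i) (u i))"
    and i0: "i0 \<ge> 1"
    and loc: "\<forall>i\<ge>i0. finite (Rset f V (u i)) \<and> finite (Sset f V (u i))
               \<and> ereal (eps i) < zeta f V (u i)
               \<and> max (dH (Rset f V (u i)) (A i)) (dH (A i) (Sset f V (u i))) \<le> delta i
               \<and> ereal (2 * l * delta i + eps i) < zeta f V (u i)
               \<and> 2 * r * B * delta i \<le> xi i"
    and div: "\<not> summable rho"
    and sq: "summable (\<lambda>i. (rho i)\<^sup>2)"
    and sx: "summable (\<lambda>i. rho i * xi i)"
  shows "(\<lambda>i. Min ((\<lambda>j. phi f V (u j)) ` {1..i})) \<longlonglongrightarrow> phi f V ustar"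
proof -
  have step: "norm (z i) \<le> L \<and> phi f V (u i) - phi f V ustar - xi i \<le> z i \<bullet> (u i - ustar)"
    if i: "i \<ge> i0" for i
  proof -
    have i1: "i \<ge> 1" using i i0 by simp
    have Ai: "finite (A i)" "A i \<subseteq> V" and ui: "u i \<in> U" using Aseq useq i1 by auto
    have "convex hull (g (u i) ` RepsA f (A i) (eps i) (u i)) \<subseteq> cball 0 L"
      using Ai ui gbound by (intro hull_minimal) (auto simp: RepsA_def convex_cball)
    then have "norm (z i) \<le> L" using zdir i1 by auto
    moreover have "phi f V (u i) - phi f V ustar - xi i \<le> z i \<bullet> (u i - ustar)"
      using loc i zdir[rule_format, OF i1]
      by (intro approx_subgradient[where g = g and \<delta> = "delta i" and \<epsilon> = "eps i" and r = r,
            OF U(2) B V(1,3) cvx _ lip_f _ ui ustar(1) Ai])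
        (auto simp: grad ui lip_g)
    ultimately show ?thesis ..
  qed
  show ?thesis
    by (rule subgradient_method_running_Min[of i0 _ _ u rho z L xi ustar])
      (use i0 ustar useq upd nonneg step div sq sx in auto)
qed

end
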